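(* Let $H_p>0$ and let $\gamma_g:\mathbb{R}\to\mathbb{R}$ be an even, $H_p$-periodic, strictly positive function that is integrable over a period. Let $n$ be an even integer. Consider the array of $n+1$ junctions indexed by $i\in\{-n/2,\dots,n/2\}$, with positions $a_i = 2\pi i/H_p$ and strengths $$d_{-i}=d_i=\frac{1}{H_p}\int_0^{H_p}\gamma_g(H)\cos(Ha_i)\,dH,\qquad i\in\{0,\dots,n/2\}.$$ Then the maximal current of this array in the magnetic approximation is $$\gamma_{max}(H)=\Big|d_0+2\sum_{i=1}^{n/2} d_i\cos(Ha_i)\Big|\qquad\text{for all } H\in\mathbb{R},$$ i.e. the absolute value of the truncation (keeping the harmonics $\cos(2\pi iH/H_p)$, $0\le i\le n/2$) of the cosine Fourier series of $\gamma_g$.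
   Context: An array of Josephson junctions (in the magnetic approximation) is described by finitely many real positions $a_1<\dots<a_m$ and real strengths $d_1,\dots,d_m$ (a negative $d_i$ corresponds to a so-called $\pi$-junction). For an applied magnetic field $H\in\mathbb{R}$, the maximal current of the array in the magnetic approximation is $$\gamma_{max}(H)=\max_{c\in\mathbb{R}}\Big|\sum_{i=1}^m d_i\sin(Ha_i+c)\Big|,$$ and $c_{max}(H)$ denotes a value of $c$ at which this maximum is attained. *)

theory Defs
  imports "HOL-Analysis.Analysis"
begin

text \<open>Array of Josephson junctions: finite index set I, positions a, strengths d.
  Maximal current in the magnetic approximation.\<close>
definition gamma_max :: "'i set \<Rightarrow> ('i \<Rightarrow> real) \<Rightarrow> ('i \<Rightarrow> real) \<Rightarrow> real \<Rightarrow> real" where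
  "gamma_max I a d H = (SUP c::real. \<bar>\<Sum>i\<in>I. d i * sin (H * a i + c)\<bar>)"

end

theory Submission
  imports Defs
begin

text \<open>By the addition formula, \<open>\<Sum>\<^sub>i d\<^sub>i sin (H a\<^sub>i + c) = S cos c + C sin c\<close> with
  \<open>S = \<Sum>\<^sub>i d\<^sub>i sin (H a\<^sub>i)\<close> and \<open>C = \<Sum>\<^sub>i d\<^sub>i cos (H a\<^sub>i)\<close>, whose maximum over \<open>c\<close> in absolute value is
  \<open>sqrt (S\<^sup>2 + C\<^sup>2)\<close>. For the symmetric array the positions are odd and the strengths even
  in \<open>i\<close>, so \<open>S = 0\<close> and \<open>C\<close> folds into the cosine sum over \<open>i \<ge> 0\<close>. The Fourier
  formula for the strengths only identifies this sum with the truncated cosine series of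
  \<open>\<gamma>\<^sub>g\<close>.\<close>

lemma abs_cos_sin_comb_le:
  fixes A B c :: real
  shows "\<bar>A * cos c + B * sin c\<bar> \<le> sqrt (A\<^sup>2 + B\<^sup>2)"
proof -
  have "(A * cos c + B * sin c)\<^sup>2 + (A * sin c - B * cos c)\<^sup>2
          = A\<^sup>2 * ((sin c)\<^sup>2 + (cos c)\<^sup>2) + B\<^sup>2 * ((sin c)\<^sup>2 + (cos c)\<^sup>2)"
    by (simp only: power2_eq_square) algebra
  then have "(A * cos c + B * sin c)\<^sup>2 + (A * sin c - B * cos c)\<^sup>2 = A\<^sup>2 + B\<^sup>2"
    by simp
  then have "(A * cos c + B * sin c)\<^sup>2 \<le> A\<^sup>2 + B\<^sup>2"
    using zero_le_power2[of "A * sin c - B * cos c"] by linarith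
  then show ?thesis
    by (metis real_sqrt_abs real_sqrt_le_mono)
qed

lemma abs_cos_sin_comb_attains:
  fixes A B :: real
  obtains c where "\<bar>A * cos c + B * sin c\<bar> = sqrt (A\<^sup>2 + B\<^sup>2)"
proof (cases "A\<^sup>2 + B\<^sup>2 = 0")
  case True
  then show ?thesis
    using that[of 0] by simp
next
  case False
  define r where "r = sqrt (A\<^sup>2 + B\<^sup>2)"
  have norm_pos: "A\<^sup>2 + B\<^sup>2 > 0"
    using False by (metis add_nonneg_nonneg zero_le_power2 order_le_neq_trans)
  then have r_pos: "r > 0"
    by (simp add: r_def)
  have "(A / r)\<^sup>2 + (B / r)\<^sup>2 = (A\<^sup>2 + B\<^sup>2) / r\<^sup>2"
    by (simp add: power_divide add_divide_distrib)
  also have "r\<^sup>2 = A\<^sup>2 + B\<^sup>2"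
    using norm_pos by (simp add: r_def)
  finally have "(A / r)\<^sup>2 + (B / r)\<^sup>2 = 1"
    using False by (metis divide_self)
  then obtain c where c: "A / r = cos c" "B / r = sin c"
    by (rule sincos_total_2pi)
  have "A * cos c + B * sin c = r * (cos c * cos c + sin c * sin c)"
    using r_pos c by (simp add: field_simps del: sin_cos_squared_add3)
  also have "\<dots> = r"
    by simp
  finally show ?thesis
    using that[of c] r_pos by (simp add: r_def)
qed

lemma Sup_abs_cos_sin_comb:
  fixes A B :: real
  shows "(SUP c. \<bar>A * cos c + B * sin c\<bar>) = sqrt (A\<^sup>2 + B\<^sup>2)"
proof (rule cSup_eq_maximum)
  obtain c where "\<bar>A * cos c + B * sin c\<bar> = sqrt (A\<^sup>2 + B\<^sup>2)"
    by (rule abs_cos_sin_comb_attains)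
  then show "sqrt (A\<^sup>2 + B\<^sup>2) \<in> range (\<lambda>c. \<bar>A * cos c + B * sin c\<bar>)"
    by (rule range_eqI [OF sym])
  show "x \<le> sqrt (A\<^sup>2 + B\<^sup>2)" if "x \<in> range (\<lambda>c. \<bar>A * cos c + B * sin c\<bar>)" for x
    using that by (elim rangeE) (simp add: abs_cos_sin_comb_le)
qed

lemma gamma_max_eq_sqrt:
  "gamma_max I a d H =
     sqrt ((\<Sum>i\<in>I. d i * sin (H * a i))\<^sup>2 + (\<Sum>i\<in>I. d i * cos (H * a i))\<^sup>2)"
proof -
  have "(\<Sum>i\<in>I. d i * sin (H * a i + c)) =
          (\<Sum>i\<in>I. d i * sin (H * a i)) * cos c + (\<Sum>i\<in>I. d i * cos (H * a i)) * sin c" for c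
    by (simp add: sin_add distrib_left sum.distrib sum_distrib_left mult_ac)
  then show ?thesis
    unfolding gamma_max_def by (simp add: Sup_abs_cos_sin_comb)
qed

lemma sum_symmetric_int_interval:
  fixes g :: "int \<Rightarrow> 'a::comm_monoid_add"
  assumes "0 \<le> m"
  shows "(\<Sum>i\<in>{-m..m}. g i) = g 0 + (\<Sum>i\<in>{1..m}. g i + g (-i))"
proof -
  have split: "{-m..m} = uminus ` {1..m} \<union> insert 0 {1..m}"
    using assms by (auto simp: image_iff intro: bexI[where x = "- _"])
  have "(\<Sum>i\<in>{-m..m}. g i) = (\<Sum>i\<in>uminus ` {1..m}. g i) + (\<Sum>i\<in>insert 0 {1..m}. g i)"
    unfolding split by (rule sum.union_disjoint) auto
  also have "(\<Sum>i\<in>uminus ` {1..m}. g i) = (\<Sum>i\<in>{1..m}. g (-i))"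
    using sum.reindex[of uminus "{1..m}" g] by (simp add: inj_on_def comp_def)
  finally show ?thesis
    by (simp add: sum.distrib add_ac)
qed

lemma sum_odd_symmetric_int_interval:
  fixes g :: "int \<Rightarrow> real"
  assumes "\<And>i. i \<in> {-m..m} \<Longrightarrow> g (-i) = - g i"
  shows "(\<Sum>i\<in>{-m..m}. g i) = 0"
proof -
  have "(\<Sum>i\<in>{-m..m}. g i) = (\<Sum>i\<in>{-m..m}. g (-i))"
    by (rule sum.reindex_bij_witness[of _ uminus uminus]) auto
  also have "\<dots> = - (\<Sum>i\<in>{-m..m}. g i)"
    by (simp add: assms sum_negf)
  finally show ?thesis
    by simp
qed

lemma gamma_max_symmetric_array:
  fixes a d :: "int \<Rightarrow> real" and m :: int
  assumes "0 \<le> m"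
    and a_odd: "\<And>i. a (-i) = - a i"
    and d_even: "\<And>i. i \<in> {0..m} \<Longrightarrow> d (-i) = d i"
  shows "gamma_max {-m..m} a d H = \<bar>d 0 + 2 * (\<Sum>i\<in>{1..m}. d i * cos (H * a i))\<bar>"
proof -
  have d_even': "d (-i) = d i" if "i \<in> {-m..m}" for i
    using d_even[of i] d_even[of "-i"] that by (cases "0 \<le> i") auto
  have "a 0 = 0"
    using a_odd[of 0] by simp
  have "(\<Sum>i\<in>{-m..m}. d i * sin (H * a i)) = 0"
    by (rule sum_odd_symmetric_int_interval) (simp add: a_odd d_even')
  moreover have "(\<Sum>i\<in>{-m..m}. d i * cos (H * a i)) =
                   d 0 + 2 * (\<Sum>i\<in>{1..m}. d i * cos (H * a i))"
    using \<open>0 \<le> m\<close> \<open>a 0 = 0\<close>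
    by (simp add: sum_symmetric_int_interval a_odd d_even sum_distrib_left)
  ultimately show ?thesis
    by (simp add: gamma_max_eq_sqrt)
qed

theorem mainTheorem1:
  fixes Hp :: real and gamma_g :: "real \<Rightarrow> real" and n :: int
    and a d :: "int \<Rightarrow> real"
  assumes Hp_pos: "Hp > 0"
    and even_g: "\<And>H. gamma_g (- H) = gamma_g H"
    and periodic_g: "\<And>H. gamma_g (H + Hp) = gamma_g H"
    and pos_g: "\<And>H. gamma_g H > 0"
    and int_g: "gamma_g integrable_on {0..Hp}"
    and n_even: "even n" and n_nonneg: "n \<ge> 0"
    and a_def: "\<And>i. a i = 2 * pi * real_of_int i / Hp"
    and d_def: "\<And>i. i \<in> {0..n div 2} \<Longrightarrow>
                 d i = (1 / Hp) * integral {0..Hp} (\<lambda>H. gamma_g H * cos (H * a i))"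
    and d_sym: "\<And>i. i \<in> {0..n div 2} \<Longrightarrow> d (- i) = d i"
  shows "\<forall>H::real. gamma_max {- (n div 2)..n div 2} a d H
           = \<bar>d 0 + 2 * (\<Sum>i\<in>{1..n div 2}. d i * cos (H * a i))\<bar>"
proof
  fix H :: real
  have "0 \<le> n div 2"
    using n_nonneg by simp
  moreover have "a (-i) = - a i" for i
    by (simp add: a_def)
  ultimately show "gamma_max {- (n div 2)..n div 2} a d H
                     = \<bar>d 0 + 2 * (\<Sum>i\<in>{1..n div 2}. d i * cos (H * a i))\<bar>"
    by (rule gamma_max_symmetric_array) (rule d_sym)
qed

end
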